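(* Let $v_j\neq v_k$ be values and $X_1,\dots,X_n$ finite domain variables. Introduce 0/1 variables $B_1,\dots,B_{n+1}$ with $B_1=0$, and for each $1\le i\le n$ the ternary constraint $C(X_i,B_i,B_{i+1})$ which holds iff ($X_i=v_j\Rightarrow B_{i+1}=1$), ($X_i\neq v_j\Rightarrow B_i=B_{i+1}$), and ($B_i=0\Rightarrow X_i\neq v_k$). Then (a) an assignment to $X_1,\dots,X_n$ satisfies $\mathrm{Precedence}([v_j,v_k],[X_1,\dots,X_n])$ iff it extends to an assignment of $B_1,\dots,B_{n+1}$ with $B_1=0$ satisfying all $C(X_i,B_i,B_{i+1})$; and (b) if the domains are such that $D(B_1)=\{0\}$ and every constraint $C(X_i,B_i,B_{i+1})$, $1\le i\le n$, is GAC (with all domains nonempty), then $\mathrm{Precedence}([v_j,v_k],[X_1,\dots,X_n])$ is GAC on the domains of $X_1,\dots,X_n$.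
   Context: A support of a constraint is an assignment of a value from its domain to each of its variables that satisfies it; a constraint is GAC iff every value in every variable's domain belongs to some support. $\mathrm{Precedence}([a,b],[X_1,\dots,X_n])$ holds iff $\min\{i \mid X_i=a \text{ or } i=n+1\} < \min\{i \mid X_i=b \text{ or } i=n+2\}$. *)

theory Defs
  imports Main
begin

text \<open>Variables X_1..X_n are indexed by 1..n; an assignment is a function nat => 'a.
  Precedence([a,b],[X_1..X_n]):
  min{i | X_i = a or i = n+1} < min{i | X_i = b or i = n+2}.\<close>
definition precedence :: "'a \<Rightarrow> 'a \<Rightarrow> nat \<Rightarrow> (nat \<Rightarrow> 'a) \<Rightarrow> bool" where
  "precedence a b n X \<longleftrightarrow>
     (LEAST i. (1 \<le> i \<and> i \<le> n \<and> X i = a) \<or> i = n + 1)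
       < (LEAST i. (1 \<le> i \<and> i \<le> n \<and> X i = b) \<or> i = n + 2)"

definition Cprec :: "'a \<Rightarrow> 'a \<Rightarrow> 'a \<Rightarrow> nat \<Rightarrow> nat \<Rightarrow> bool" where
  "Cprec vj vk x b b' \<longleftrightarrow>
     (x = vj \<longrightarrow> b' = 1) \<and> (x \<noteq> vj \<longrightarrow> b = b') \<and> (b = 0 \<longrightarrow> x \<noteq> vk)"

definition gac3 :: "('x \<Rightarrow> 'y \<Rightarrow> 'z \<Rightarrow> bool) \<Rightarrow> 'x set \<Rightarrow> 'y set \<Rightarrow> 'z set \<Rightarrow> bool" where
  "gac3 C DX D1 D2 \<longleftrightarrow>
     (\<forall>x\<in>DX. \<exists>y\<in>D1. \<exists>z\<in>D2. C x y z) \<and>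
     (\<forall>y\<in>D1. \<exists>x\<in>DX. \<exists>z\<in>D2. C x y z) \<and>
     (\<forall>z\<in>D2. \<exists>x\<in>DX. \<exists>y\<in>D1. C x y z)"

definition gacn :: "nat \<Rightarrow> (nat \<Rightarrow> 'a set) \<Rightarrow> ((nat \<Rightarrow> 'a) \<Rightarrow> bool) \<Rightarrow> bool" where
  "gacn n D P \<longleftrightarrow>
     (\<forall>i\<in>{1..n}. \<forall>d\<in>D i. \<exists>X. (\<forall>k\<in>{1..n}. X k \<in> D k) \<and> X i = d \<and> P X)"

end

theory Submission
  imports Defs
begin

(* Both parts rest on one characterisation: for vj ~= vk,
   Precedence([vj,vk],X) holds iff every occurrence of vk is preceded by an
   occurrence of vj (lemma precedence_iff_vk_preceded).
   (a) The 0/1 variable B_i of the decomposition records "vj occurred among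
   X_1..X_(i-1)": any solution of the chain forces B_i = 1 only after a vj
   (so a vk at i is preceded by a vj), and conversely this indicator is a
   solution (lemma Cprec_chain_iff).
   (b) For an arbitrary ternary constraint C, the chain C(X_i,B_i,B_(i+1))
   has Berge-acyclic structure, so GAC of each link makes the whole chain
   GAC: a partial solution on a segment of positions can be extended to the
   left and to the right, and solutions on adjacent segments glue
   (lemmas chain_solution_glue, _prefix, _suffix, chain_gac).  A global
   solution through a value d of X_i then satisfies Precedence by (a). *)

definition vk_preceded :: "'a \<Rightarrow> 'a \<Rightarrow> nat \<Rightarrow> (nat \<Rightarrow> 'a) \<Rightarrow> bool" where
  "vk_preceded vj vk n X \<longleftrightarrow> (\<forall>i\<in>{1..n}. X i = vk \<longrightarrow> (\<exists>j\<in>{1..<i}. X j = vj))"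

text \<open>The two LEAST-expressions in the definition of precedence compare the first
  position of vj with the first position of vk (with sentinels n+1 < n+2).\<close>
lemma precedence_iff_vk_preceded:
  assumes "vj \<noteq> vk"
  shows "precedence vj vk n X \<longleftrightarrow> vk_preceded vj vk n X"
proof -
  define A where "A = (LEAST i. (1 \<le> i \<and> i \<le> n \<and> X i = vj) \<or> i = n + 1)"
  define K where "K = (LEAST i. (1 \<le> i \<and> i \<le> n \<and> X i = vk) \<or> i = n + 2)"
  have A: "(1 \<le> A \<and> A \<le> n \<and> X A = vj) \<or> A = n + 1"
    unfolding A_def by (rule LeastI[of _ "n + 1"]) simp
  have K: "(1 \<le> K \<and> K \<le> n \<and> X K = vk) \<or> K = n + 2"
    unfolding K_def by (rule LeastI[of _ "n + 2"]) simp
  have A_min: "(1 \<le> j \<and> j \<le> n \<and> X j = vj) \<or> j = n + 1 \<Longrightarrow> A \<le> j" for j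
    unfolding A_def by (rule Least_le)
  have K_min: "(1 \<le> j \<and> j \<le> n \<and> X j = vk) \<or> j = n + 2 \<Longrightarrow> K \<le> j" for j
    unfolding K_def by (rule Least_le)
  have "A < K \<longleftrightarrow> vk_preceded vj vk n X"
    unfolding vk_preceded_def
  proof (intro iffI ballI impI)
    fix i assume "A < K" and i: "i \<in> {1..n}" "X i = vk"
    then have "A < i" using K_min[of i] A assms by fastforce
    then show "\<exists>j\<in>{1..<i}. X j = vj" using A i by auto
  next
    assume preceded: "\<forall>i\<in>{1..n}. X i = vk \<longrightarrow> (\<exists>j\<in>{1..<i}. X j = vj)"
    show "A < K"
    proof (cases "K = n + 2")
      case True
      then show ?thesis using A_min[of "n + 1"] by simp
    next
      case False
      then obtain j where "j \<in> {1..<K}" "X j = vj" using K preceded by auto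
      then show ?thesis using A_min[of j] K False by auto
    qed
  qed
  then show ?thesis unfolding precedence_def A_def K_def .
qed

text \<open>Any chain solution with B 1 = 0 can only switch B to 1 at a vj, so B i \<noteq> 0
  witnesses a vj before position i.\<close>
lemma Cprec_chain_B_nonzero:
  fixes i :: nat
  assumes B1: "B 1 = 0"
    and chain: "\<forall>i\<in>{1..n}. Cprec vj vk (X i) (B i) (B (i + 1))"
  shows "1 \<le> i \<Longrightarrow> i \<le> n + 1 \<Longrightarrow> B i \<noteq> 0 \<Longrightarrow> \<exists>j\<in>{1..<i}. X j = vj"
proof (induction i)
  case (Suc m)
  show ?case
  proof (cases "m = 0 \<or> X m = vj")
    case True
    then show ?thesis using B1 Suc.prems by (cases "m = 0") auto
  next
    case False
    then have "B (Suc m) = B m" using chain Suc.prems unfolding Cprec_def by auto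
    then show ?thesis using Suc False by fastforce
  qed
qed simp

lemma Cprec_chain_iff:
  "(\<exists>B :: nat \<Rightarrow> nat. (\<forall>i\<in>{1..n+1}. B i \<in> {0, 1}) \<and> B 1 = 0 \<and>
                 (\<forall>i\<in>{1..n}. Cprec vj vk (X i) (B i) (B (i + 1))))
   \<longleftrightarrow> vk_preceded vj vk n X"
proof
  assume "\<exists>B :: nat \<Rightarrow> nat. (\<forall>i\<in>{1..n+1}. B i \<in> {0, 1}) \<and> B 1 = 0 \<and>
                 (\<forall>i\<in>{1..n}. Cprec vj vk (X i) (B i) (B (i + 1)))"
  then obtain B :: "nat \<Rightarrow> nat" where B1: "B 1 = 0"
    and chain: "\<forall>i\<in>{1..n}. Cprec vj vk (X i) (B i) (B (i + 1))" by blast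
  show "vk_preceded vj vk n X"
    unfolding vk_preceded_def
  proof (intro ballI impI)
    fix i assume i: "i \<in> {1..n}" "X i = vk"
    then have "B i \<noteq> 0" using chain unfolding Cprec_def by auto
    then show "\<exists>j\<in>{1..<i}. X j = vj" using Cprec_chain_B_nonzero[OF B1 chain] i by auto
  qed
next
  assume preceded: "vk_preceded vj vk n X"
  define B :: "nat \<Rightarrow> nat" where "B i = (if \<exists>j\<in>{1..<i}. X j = vj then 1 else 0)" for i
  have "Cprec vj vk (X i) (B i) (B (i + 1))" if i: "i \<in> {1..n}" for i
  proof -
    have "(\<exists>j\<in>{1..<i+1}. X j = vj) \<longleftrightarrow> (\<exists>j\<in>{1..<i}. X j = vj) \<or> X i = vj"
      using i less_Suc_eq by auto
    then show ?thesis
      using preceded i unfolding Cprec_def B_def vk_preceded_def by auto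
  qed
  then show "\<exists>B :: nat \<Rightarrow> nat. (\<forall>i\<in>{1..n+1}. B i \<in> {0, 1}) \<and> B 1 = 0 \<and>
                 (\<forall>i\<in>{1..n}. Cprec vj vk (X i) (B i) (B (i + 1)))"
    by (intro exI[of _ B]) (auto simp: B_def)
qed

definition chain_solution ::
  "('x \<Rightarrow> 'b \<Rightarrow> 'b \<Rightarrow> bool) \<Rightarrow> (nat \<Rightarrow> 'x set) \<Rightarrow> (nat \<Rightarrow> 'b set) \<Rightarrow> nat \<Rightarrow> nat
     \<Rightarrow> (nat \<Rightarrow> 'x) \<Rightarrow> (nat \<Rightarrow> 'b) \<Rightarrow> bool" where
  "chain_solution C D DB l r X B \<longleftrightarrow>
     (\<forall>j\<in>{l..r}. B j \<in> DB j) \<and> (\<forall>j\<in>{l..<r}. X j \<in> D j \<and> C (X j) (B j) (B (j + 1)))"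

definition glue :: "nat \<Rightarrow> (nat \<Rightarrow> 'v) \<Rightarrow> (nat \<Rightarrow> 'v) \<Rightarrow> nat \<Rightarrow> 'v" where
  "glue m f g j = (if j < m then f j else g j)"

text \<open>Solutions on adjacent segments that agree on the shared B_m glue together;
  this is where the chain (acyclic) structure is used.\<close>
lemma chain_solution_glue:
  assumes "chain_solution C D DB l m X1 B1" "chain_solution C D DB m r X2 B2"
    and "B1 m = B2 m" "l \<le> m" "m \<le> r"
  shows "chain_solution C D DB l r (glue m X1 X2) (glue m B1 B2)"
proof -
  have B_next: "glue m B1 B2 (j + 1) = B1 (j + 1)" if "j < m" for j
    using that assms(3) by (cases "j + 1 = m") (auto simp: glue_def)
  have left: "j \<in> {l..<m} \<Longrightarrow> glue m X1 X2 j \<in> D j \<and>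
      C (glue m X1 X2 j) (glue m B1 B2 j) (glue m B1 B2 (j + 1))" for j
    using assms(1) B_next unfolding chain_solution_def by (auto simp: glue_def)
  have right: "j \<in> {m..<r} \<Longrightarrow> glue m X1 X2 j \<in> D j \<and>
      C (glue m X1 X2 j) (glue m B1 B2 j) (glue m B1 B2 (j + 1))" for j
    using assms(2) unfolding chain_solution_def by (auto simp: glue_def)
  have "j \<in> {l..r} \<Longrightarrow> glue m B1 B2 j \<in> DB j" for j
    using assms(1,2) unfolding chain_solution_def glue_def by auto
  moreover have "{l..<r} = {l..<m} \<union> {m..<r}" using assms(4,5) by auto
  ultimately show ?thesis
    using left right unfolding chain_solution_def by blast
qed

lemma chain_solution_link:
  assumes "x \<in> D k" "b \<in> DB k" "b' \<in> DB (k + 1)" "C x b b'"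
  shows "chain_solution C D DB k (k + 1) (\<lambda>_. x) (\<lambda>j. if j \<le> k then b else b')"
  using assms unfolding chain_solution_def by (auto simp: le_Suc_eq)

context
  fixes C :: "'x \<Rightarrow> 'b \<Rightarrow> 'b \<Rightarrow> bool" and D :: "nat \<Rightarrow> 'x set" and DB :: "nat \<Rightarrow> 'b set"
    and n :: nat
  assumes links_gac: "\<forall>i\<in>{1..n}. gac3 C (D i) (DB i) (DB (i + 1))"
begin

text \<open>Every value of B_k extends to a solution on the prefix 1..k
  (using the support of the value of B_k in the link to its left).\<close>
lemma chain_solution_prefix:
  "1 \<le> k \<Longrightarrow> k \<le> n + 1 \<Longrightarrow> b \<in> DB k \<Longrightarrow>
     \<exists>X B. chain_solution C D DB 1 k X B \<and> B k = b"
proof (induction k arbitrary: b)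
  case (Suc m)
  show ?case
  proof (cases "m = 0")
    case True
    then show ?thesis using Suc.prems by (auto simp: chain_solution_def)
  next
    case False
    then have m: "m \<in> {1..n}" using Suc.prems by auto
    then obtain x y where xy: "x \<in> D m" "y \<in> DB m" "C x y b"
      using links_gac Suc.prems unfolding gac3_def by (metis Suc_eq_plus1)
    obtain X B where XB: "chain_solution C D DB 1 m X B" "B m = y"
      using Suc.IH[OF _ _ xy(2)] m by auto
    have link: "chain_solution C D DB m (m + 1) (\<lambda>_. x) (\<lambda>j. if j \<le> m then y else b)"
      by (rule chain_solution_link) (use xy Suc.prems in simp_all)
    have "chain_solution C D DB 1 (m + 1) (glue m X (\<lambda>_. x))
            (glue m B (\<lambda>j. if j \<le> m then y else b))"
      using chain_solution_glue[OF XB(1) link] XB(2) m by simp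
    moreover have "glue m B (\<lambda>j. if j \<le> m then y else b) (m + 1) = b" by (simp add: glue_def)
    ultimately show ?thesis by auto
  qed
qed simp

lemma chain_solution_suffix:
  "1 \<le> k \<Longrightarrow> k \<le> n + 1 \<Longrightarrow> b \<in> DB k \<Longrightarrow>
     \<exists>X B. chain_solution C D DB k (n + 1) X B \<and> B k = b"
proof (induction "n + 1 - k" arbitrary: k b)
  case 0
  then show ?case by (auto simp: chain_solution_def)
next
  case (Suc m)
  then have k: "k \<in> {1..n}" by auto
  then obtain x z where xz: "x \<in> D k" "z \<in> DB (k + 1)" "C x b z"
    using links_gac Suc.prems unfolding gac3_def by blast
  have "m = n + 1 - (k + 1)" using Suc.hyps(2) by simp
  then obtain X B where XB: "chain_solution C D DB (k + 1) (n + 1) X B" "B (k + 1) = z"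
    using Suc.hyps(1)[of "k + 1" z] xz(2) k by auto
  have link: "chain_solution C D DB k (k + 1) (\<lambda>_. x) (\<lambda>j. if j \<le> k then b else z)"
    by (rule chain_solution_link) (use xz Suc.prems in simp_all)
  have "chain_solution C D DB k (n + 1) (glue (k + 1) (\<lambda>_. x) X)
          (glue (k + 1) (\<lambda>j. if j \<le> k then b else z) B)"
    using chain_solution_glue[OF link XB(1)] XB(2) k by simp
  moreover have "glue (k + 1) (\<lambda>j. if j \<le> k then b else z) B k = b" by (simp add: glue_def)
  ultimately show ?case by blast
qed

lemma chain_gac:
  assumes i: "i \<in> {1..n}" and d: "d \<in> D i"
  shows "\<exists>X B. chain_solution C D DB 1 (n + 1) X B \<and> X i = d"
proof -
  obtain b b' where bb: "b \<in> DB i" "b' \<in> DB (i + 1)" "C d b b'"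
    using links_gac i d unfolding gac3_def by blast
  obtain X1 B1 where pre: "chain_solution C D DB 1 i X1 B1" "B1 i = b"
    using chain_solution_prefix[of i b] i bb by auto
  obtain X2 B2 where suf: "chain_solution C D DB (i + 1) (n + 1) X2 B2" "B2 (i + 1) = b'"
    using chain_solution_suffix[of "i + 1" b'] i bb by auto
  have link: "chain_solution C D DB i (i + 1) (\<lambda>_. d) (\<lambda>j. if j \<le> i then b else b')"
    by (rule chain_solution_link) (use d bb in simp_all)
  define Xl Bl where "Xl = glue i X1 (\<lambda>_. d)" and "Bl = glue i B1 (\<lambda>j. if j \<le> i then b else b')"
  have "chain_solution C D DB 1 (i + 1) Xl Bl"
    unfolding Xl_def Bl_def using chain_solution_glue[OF pre(1) link] pre(2) i by simp
  then have "chain_solution C D DB 1 (n + 1) (glue (i + 1) Xl X2) (glue (i + 1) Bl B2)"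
    using chain_solution_glue[OF _ suf(1)] suf(2) i by (simp add: Bl_def glue_def)
  moreover have "glue (i + 1) Xl X2 i = d" by (simp add: glue_def Xl_def)
  ultimately show ?thesis by blast
qed

end

theorem mainTheorem7:
  fixes vj vk :: 'a and n :: nat
  assumes "vj \<noteq> vk"
  shows "(\<forall>X :: nat \<Rightarrow> 'a.
            precedence vj vk n X \<longleftrightarrow>
            (\<exists>B :: nat \<Rightarrow> nat. (\<forall>i\<in>{1..n+1}. B i \<in> {0, 1}) \<and> B 1 = 0 \<and>
                 (\<forall>i\<in>{1..n}. Cprec vj vk (X i) (B i) (B (i + 1)))))
       \<and> (\<forall>(D :: nat \<Rightarrow> 'a set) (DB :: nat \<Rightarrow> nat set).
            (\<forall>i\<in>{1..n}. finite (D i) \<and> D i \<noteq> {}) \<and>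
            (\<forall>i\<in>{1..n+1}. DB i \<subseteq> {0, 1} \<and> DB i \<noteq> {}) \<and>
            DB 1 = {0} \<and>
            (\<forall>i\<in>{1..n}. gac3 (Cprec vj vk) (D i) (DB i) (DB (i + 1)))
            \<longrightarrow> gacn n D (precedence vj vk n))"
proof (intro conjI allI impI)
  fix X :: "nat \<Rightarrow> 'a"
  show "precedence vj vk n X \<longleftrightarrow>
          (\<exists>B :: nat \<Rightarrow> nat. (\<forall>i\<in>{1..n+1}. B i \<in> {0, 1}) \<and> B 1 = 0 \<and>
               (\<forall>i\<in>{1..n}. Cprec vj vk (X i) (B i) (B (i + 1))))"
    unfolding precedence_iff_vk_preceded[OF assms] Cprec_chain_iff ..
next
  fix D :: "nat \<Rightarrow> 'a set" and DB :: "nat \<Rightarrow> nat set"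
  assume h: "(\<forall>i\<in>{1..n}. finite (D i) \<and> D i \<noteq> {}) \<and>
            (\<forall>i\<in>{1..n+1}. DB i \<subseteq> {0, 1} \<and> DB i \<noteq> {}) \<and>
            DB 1 = {0} \<and>
            (\<forall>i\<in>{1..n}. gac3 (Cprec vj vk) (D i) (DB i) (DB (i + 1)))"
  then have DB_bin: "\<forall>i\<in>{1..n+1}. DB i \<subseteq> {0, 1}" and DB_1: "DB 1 = {0}"
    and links: "\<forall>i\<in>{1..n}. gac3 (Cprec vj vk) (D i) (DB i) (DB (i + 1))" by blast+
  show "gacn n D (precedence vj vk n)"
    unfolding gacn_def
  proof (intro ballI)
    fix i d assume "i \<in> {1..n}" "d \<in> D i"
    then obtain X B where sol: "chain_solution (Cprec vj vk) D DB 1 (n + 1) X B" "X i = d"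
      using chain_gac[OF links] by blast
    have B_dom: "\<forall>j\<in>{1..n+1}. B j \<in> DB j"
      and X_dom: "\<forall>j\<in>{1..n}. X j \<in> D j"
      and chain: "\<forall>j\<in>{1..n}. Cprec vj vk (X j) (B j) (B (j + 1))"
      using sol(1) unfolding chain_solution_def by (simp_all add: atLeastLessThanSuc_atLeastAtMost)
    have "B 1 = 0" using B_dom DB_1 by fastforce
    moreover have "\<forall>j\<in>{1..n+1}. B j \<in> {0, 1}" using B_dom DB_bin by blast
    ultimately have "precedence vj vk n X"
      unfolding precedence_iff_vk_preceded[OF assms] Cprec_chain_iff[symmetric] using chain by blast
    then show "\<exists>X. (\<forall>k\<in>{1..n}. X k \<in> D k) \<and> X i = d \<and> precedence vj vk n X"
      using X_dom sol(2) by blast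
  qed
qed

end
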